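(* Let $p,q\in(0,1)$. The following are equivalent: (a) $\mathbb{P}^{(1,1)}_{p,q}(\tau=+\infty)>0$; (b) there exist integers $N\ge1$ and $T\ge1$ such that $\mathbb{E}^{(N,N)}_{p,q}\big[\lfloor Z_T/N\rfloor\big]>1$.
   Context: Cooperative model: for $p,q\in(0,1)$, a Markov chain $(X_n,Y_n)_{n\ge0}$ on $\mathbb{N}^2$ whose transition law from state $(x,y)$ is $\mu_{(x,y)}=\mathrm{Bin}(2,q)^{*(x+y)}\otimes\mathrm{Bin}(2,p)^{*\min(x,y)}$, i.e. given the past, $X_{n+1}\sim\mathrm{Bin}(2(X_n+Y_n),q)$ and $Y_{n+1}\sim\mathrm{Bin}(2\min(X_n,Y_n),p)$ are independent. $\mathbb{P}^{(x,y)}_{p,q}$ (with expectation $\mathbb{E}^{(x,y)}_{p,q}$) denotes the law of this process started from $(x,y)$. $Z_n=\min(X_n,Y_n)$ and $\tau=\inf\{n\ge0: Z_n=0\}$. *)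

theory Defs
  imports "HOL-Probability.Probability"
begin

text \<open>One-step transition law of the cooperative model from state (x,y):
  X' ~ Bin(2(x+y), q) and Y' ~ Bin(2 min(x,y), p), independent.
  Note Bin(2,q)^{*(x+y)} = Bin(2(x+y),q).\<close>
definition coop_step :: "real \<Rightarrow> real \<Rightarrow> nat \<times> nat \<Rightarrow> (nat \<times> nat) pmf" where
  "coop_step p q s = (case s of (x, y) \<Rightarrow>
      pair_pmf (binomial_pmf (2 * (x + y)) q) (binomial_pmf (2 * min x y) p))"

primrec coop_path :: "real \<Rightarrow> real \<Rightarrow> nat \<Rightarrow> nat \<times> nat \<Rightarrow> (nat \<times> nat) list pmf" where
  "coop_path p q 0 s = return_pmf [s]"
| "coop_path p q (Suc n) s =
     bind_pmf (coop_step p q s) (\<lambda>t. map_pmf (Cons s) (coop_path p q n t))"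

definition coop_state :: "real \<Rightarrow> real \<Rightarrow> nat \<Rightarrow> nat \<times> nat \<Rightarrow> (nat \<times> nat) pmf" where
  "coop_state p q n s = map_pmf last (coop_path p q n s)"

definition Zval :: "nat \<times> nat \<Rightarrow> nat" where
  "Zval s = min (fst s) (snd s)"

text \<open>P^s(tau > n) = P^s(Z_0 > 0, ..., Z_n > 0).\<close>
definition coop_surv :: "real \<Rightarrow> real \<Rightarrow> nat \<Rightarrow> nat \<times> nat \<Rightarrow> real" where
  "coop_surv p q n s = measure_pmf.prob (coop_path p q n s) {xs. \<forall>z\<in>set xs. 0 < Zval z}"

text \<open>P^s(tau = +infinity) = lim_n P^s(tau > n) = inf_n P^s(tau > n)
  (continuity from above of the path measure; the events are decreasing).\<close>
definition coop_surv_inf :: "real \<Rightarrow> real \<Rightarrow> nat \<times> nat \<Rightarrow> real" where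
  "coop_surv_inf p q s = (INF n. coop_surv p q n s)"

end

theory Submission
  imports Defs
begin

(* If Z stays bounded in mean along the chain, the surviving mass keeps sitting on states of
   bounded size (Markov's inequality), each of which is killed in one step with probability at
   least (1 - p)^(2M); hence survival has probability 0. Failure of (b) for N = 1 gives exactly
   such a bound from (1,1).

   Conversely, the one-step mean of a [0,1]-valued, antitone, submultiplicative function of the
   state is again of this kind, because Bin(n + m) is the sum of independent Bin(n) and Bin(m)
   and min is superadditive. Take h = g^(Z div N) with g < 1 below the diagonal of the generating
   function of Z_T div N started from (N,N). Then H(s) = E^s h(X_T) satisfies
   H(s) <= H(N,N)^(Z(s) div N) <= h(s), so h is a supermartingale along multiples of T and the
   process survives forever from s with probability at least 1 - h(s). A state with Z >= N is
   reached from (1,1) with positive probability. *)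

lemma expectation_bind_pmf_finite:
  fixes h :: "'b \<Rightarrow> real"
  assumes "finite (set_pmf M)" "\<And>x. x \<in> set_pmf M \<Longrightarrow> finite (set_pmf (N x))"
  shows "measure_pmf.expectation (M \<bind> N) h =
    measure_pmf.expectation M (\<lambda>x. measure_pmf.expectation (N x) h)"
proof -
  have "measure_pmf.expectation (M \<bind> N) h =
      (\<Sum>x\<in>set_pmf M. pmf M x *\<^sub>R measure_pmf.expectation (N x) h)"
    using assms by (intro pmf_expectation_bind) auto
  also have "\<dots> = measure_pmf.expectation M (\<lambda>x. measure_pmf.expectation (N x) h)"
    using assms by (subst integral_measure_pmf[of "set_pmf M"]) auto
  finally show ?thesis .
qed

lemma measure_pmf_prob_as_expectation:
  "measure_pmf.prob M A = measure_pmf.expectation M (indicator A)"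
  by simp

lemma measure_pmf_prob_gt_le_expectation:
  fixes f :: "'a \<Rightarrow> real"
  assumes "integrable (measure_pmf M) f" "\<And>x. 0 \<le> f x" "0 < a"
  shows "measure_pmf.prob M {x. a < f x} \<le> measure_pmf.expectation M f / a"
proof -
  have "measure_pmf.prob M {x. a < f x} \<le> measure_pmf.prob M {x. a \<le> f x}"
    by (intro measure_pmf.finite_measure_mono) auto
  also have "\<dots> \<le> measure_pmf.expectation M f / a"
    using integral_Markov_inequality_measure[of M f UNIV a] assms by simp
  finally show ?thesis .
qed

lemma expectation_pair_pmf_finite:
  fixes f :: "'a \<times> 'b \<Rightarrow> real"
  assumes "finite (set_pmf A)" "finite (set_pmf B)"
  shows "measure_pmf.expectation (pair_pmf A B) f =
    measure_pmf.expectation A (\<lambda>a. measure_pmf.expectation B (\<lambda>b. f (a, b)))"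
  unfolding pair_pmf_def using assms by (simp add: expectation_bind_pmf_finite)

lemma expectation_pmf_swap_finite:
  fixes f :: "'a \<Rightarrow> 'b \<Rightarrow> real"
  assumes "finite (set_pmf A)" "finite (set_pmf B)"
  shows "measure_pmf.expectation A (\<lambda>a. measure_pmf.expectation B (\<lambda>b. f a b)) =
    measure_pmf.expectation B (\<lambda>b. measure_pmf.expectation A (\<lambda>a. f a b))"
proof -
  have "measure_pmf.expectation (pair_pmf A B) (\<lambda>x. f (fst x) (snd x)) =
      measure_pmf.expectation (pair_pmf B A) (\<lambda>x. f (snd x) (fst x))"
    by (subst pair_commute_pmf) (simp add: case_prod_beta)
  then show ?thesis
    using assms by (simp add: expectation_pair_pmf_finite)
qed

lemma binomial_pmf_add:
  assumes "r \<in> {0..1}"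
  shows "binomial_pmf (m + n) r = binomial_pmf m r \<bind> (\<lambda>x. map_pmf ((+) x) (binomial_pmf n r))"
proof (induction m)
  case 0
  then show ?case
    using assms by (simp add: binomial_pmf_0 bind_return_pmf map_pmf_ident[unfolded id_def]
        cong: map_pmf_cong)
next
  case (Suc m)
  have "binomial_pmf (Suc (m + n)) r =
      bernoulli_pmf r \<bind> (\<lambda>b. binomial_pmf (m + n) r \<bind> (\<lambda>k. return_pmf ((if b then 1 else 0) + k)))"
    using assms by (rule binomial_pmf_Suc)
  then show ?case
    unfolding Suc binomial_pmf_Suc[OF assms, of m]
    by (simp add: bind_assoc_pmf bind_return_pmf map_pmf_def add.assoc)
qed

lemma expectation_binomial_pmf_add:
  fixes f :: "nat \<Rightarrow> real"
  assumes "r \<in> {0..1}"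
  shows "measure_pmf.expectation (binomial_pmf (m + n) r) f =
    measure_pmf.expectation (binomial_pmf m r)
      (\<lambda>x. measure_pmf.expectation (binomial_pmf n r) (\<lambda>y. f (x + y)))"
  using assms by (simp add: binomial_pmf_add expectation_bind_pmf_finite finite_set_pmf_binomial_pmf)

lemma one_minus_power_le:
  fixes e :: real
  assumes "0 \<le> e" "e \<le> 1"
  shows "(1 - e) ^ k \<le> 1 - k * e + (k * e)\<^sup>2"
proof (induction k)
  case 0
  then show ?case
    by simp
next
  case (Suc k)
  have "(1 - e) ^ Suc k \<le> (1 - e) * (1 - k * e + (k * e)\<^sup>2)"
    using Suc assms by (simp add: mult_left_mono)
  also have "\<dots> = 1 - Suc k * e + (Suc k * e)\<^sup>2 - (k + 1) * e\<^sup>2 - k\<^sup>2 * e ^ 3"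
    by (simp add: algebra_simps power2_eq_square power3_eq_cube)
  also have "\<dots> \<le> 1 - Suc k * e + (Suc k * e)\<^sup>2"
  proof -
    have "0 \<le> (k + 1) * e\<^sup>2 + k\<^sup>2 * e ^ 3"
      using assms by simp
    then show ?thesis
      by linarith
  qed
  finally show ?case .
qed

text \<open>A generating function with slope \<open>E X > 1\<close> at \<open>1\<close> dips below the diagonal just left of
  \<open>1\<close>; the second-order bound above shows that \<open>g = 1 - (E X - 1) / E (X\<^sup>2)\<close> is such a point.\<close>
lemma pgf_below_diagonal:
  fixes M :: "nat pmf"
  assumes fin: "finite (set_pmf M)" and mean: "1 < measure_pmf.expectation M real"
  obtains g :: real where "0 \<le> g" "g < 1" "measure_pmf.expectation M (\<lambda>k. g ^ k) \<le> g"
proof -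
  define m where "m = measure_pmf.expectation M real"
  define S where "S = measure_pmf.expectation M (\<lambda>k. (real k)\<^sup>2)"
  have int: "integrable (measure_pmf M) f" for f :: "nat \<Rightarrow> real"
    using fin by (rule integrable_measure_pmf_finite)
  have "m \<le> S"
  proof (unfold m_def S_def, intro integral_mono int)
    show "real k \<le> (real k)\<^sup>2" for k
      by (cases k) (auto simp: power2_eq_square)
  qed
  define e where "e = (m - 1) / S"
  have e: "0 < e" "e \<le> 1" "S * e\<^sup>2 = (m - 1) * e"
    using mean \<open>m \<le> S\<close> by (auto simp: e_def m_def field_simps power2_eq_square)
  have "measure_pmf.expectation M (\<lambda>k. (1 - e) ^ k) \<le>
      measure_pmf.expectation M (\<lambda>k. 1 - k * e + (k * e)\<^sup>2)"
    using e by (intro integral_mono int one_minus_power_le) auto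
  also have "\<dots> = 1 - m * e + S * e\<^sup>2"
    by (simp add: int m_def S_def power_mult_distrib)
  also have "\<dots> = 1 - e"
    using e by (simp add: algebra_simps)
  finally show ?thesis
    using e by (intro that[of "1 - e"]) auto
qed

definition binomial_pair_pmf :: "real \<Rightarrow> real \<Rightarrow> nat \<times> nat \<Rightarrow> (nat \<times> nat) pmf" where
  "binomial_pair_pmf r1 r2 = (\<lambda>(n, m). pair_pmf (binomial_pmf n r1) (binomial_pmf m r2))"

lemma finite_set_binomial_pair_pmf:
  "r1 \<in> {0..1} \<Longrightarrow> r2 \<in> {0..1} \<Longrightarrow> finite (set_pmf (binomial_pair_pmf r1 r2 u))"
  by (cases u) (auto simp: binomial_pair_pmf_def intro!: finite_cartesian_product)

lemma expectation_binomial_pair_pmf_add: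
  fixes h :: "nat \<times> nat \<Rightarrow> real"
  assumes r: "r1 \<in> {0..1}" "r2 \<in> {0..1}"
  shows "measure_pmf.expectation (binomial_pair_pmf r1 r2 (u + v)) h =
    measure_pmf.expectation (binomial_pair_pmf r1 r2 u)
      (\<lambda>x. measure_pmf.expectation (binomial_pair_pmf r1 r2 v) (\<lambda>y. h (x + y)))"
proof -
  obtain n1 m1 n2 m2 where uv: "u = (n1, m1)" "v = (n2, m2)"
    by fastforce
  let ?E = "measure_pmf.expectation :: nat pmf \<Rightarrow> (nat \<Rightarrow> real) \<Rightarrow> real"
  have fin: "finite (set_pmf (binomial_pmf n r1))" "finite (set_pmf (binomial_pmf n r2))" for n
    using r by auto
  have "measure_pmf.expectation (binomial_pair_pmf r1 r2 (u + v)) h =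
      ?E (binomial_pmf n1 r1) (\<lambda>x1. ?E (binomial_pmf n2 r1) (\<lambda>x2.
        ?E (binomial_pmf m1 r2) (\<lambda>y1. ?E (binomial_pmf m2 r2) (\<lambda>y2. h (x1 + x2, y1 + y2)))))"
    using r by (simp add: uv binomial_pair_pmf_def fin expectation_pair_pmf_finite
        expectation_binomial_pmf_add[of r1] expectation_binomial_pmf_add[of r2])
  also have "\<dots> = ?E (binomial_pmf n1 r1) (\<lambda>x1. ?E (binomial_pmf m1 r2) (\<lambda>y1.
        ?E (binomial_pmf n2 r1) (\<lambda>x2. ?E (binomial_pmf m2 r2) (\<lambda>y2. h (x1 + x2, y1 + y2)))))"
    by (subst expectation_pmf_swap_finite) (auto simp: fin)
  also have "\<dots> = measure_pmf.expectation (binomial_pair_pmf r1 r2 u)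
      (\<lambda>x. measure_pmf.expectation (binomial_pair_pmf r1 r2 v) (\<lambda>y. h (x + y)))"
    by (simp add: uv binomial_pair_pmf_def fin expectation_pair_pmf_finite)
  finally show ?thesis .
qed

definition antimono_submult :: "(nat \<times> nat \<Rightarrow> real) \<Rightarrow> bool" where
  "antimono_submult h \<longleftrightarrow>
     (\<forall>x. 0 \<le> h x \<and> h x \<le> 1) \<and> antimono h \<and> (\<forall>x y. h (x + y) \<le> h x * h y)"

lemma antimono_submultD:
  assumes "antimono_submult h"
  shows "0 \<le> h x" "h x \<le> 1" "x \<le> y \<Longrightarrow> h y \<le> h x" "h (x + y) \<le> h x * h y"
  using assms unfolding antimono_submult_def by (blast dest: antimonoD)+

lemma antimono_submultI:
  assumes "\<And>x. 0 \<le> h x" "\<And>x. h x \<le> 1" "\<And>x y. x \<le> y \<Longrightarrow> h y \<le> h x"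
    and "\<And>x y. h (x + y) \<le> h x * h y"
  shows "antimono_submult h"
  unfolding antimono_submult_def using assms by (blast intro: antimonoI)

lemma le_add_prod_nat: "(x :: nat \<times> nat) \<le> x + y"
  by (cases x; cases y) (simp add: less_eq_prod_def)

lemma antimono_submult_binomial_pair:
  assumes h: "antimono_submult h" and r: "r1 \<in> {0..1}" "r2 \<in> {0..1}"
  shows "antimono_submult (\<lambda>u. measure_pmf.expectation (binomial_pair_pmf r1 r2 u) h)"
proof -
  let ?B = "binomial_pair_pmf r1 r2"
  have int: "integrable (measure_pmf (?B u)) f" for u and f :: "_ \<Rightarrow> real"
    using r by (intro integrable_measure_pmf_finite finite_set_binomial_pair_pmf)
  have nonneg: "0 \<le> measure_pmf.expectation (?B u) h" for u
    using antimono_submultD(1)[OF h] by (intro integral_nonneg_AE) auto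
  have le_1: "measure_pmf.expectation (?B u) h \<le> 1" for u
  proof -
    have "measure_pmf.expectation (?B u) h \<le> measure_pmf.expectation (?B u) (\<lambda>_. 1)"
      by (intro integral_mono int antimono_submultD(2)[OF h])
    then show ?thesis
      by simp
  qed
  have antitone: "measure_pmf.expectation (?B v) h \<le> measure_pmf.expectation (?B u) h"
    if "u \<le> v" for u v
  proof -
    obtain w where v: "v = u + w"
      using \<open>u \<le> v\<close> by (intro that[of "(fst v - fst u, snd v - snd u)"])
        (auto simp: less_eq_prod_def prod_eq_iff)
    have "measure_pmf.expectation (?B v) h =
        measure_pmf.expectation (?B u) (\<lambda>x. measure_pmf.expectation (?B w) (\<lambda>y. h (x + y)))"
      unfolding v using r by (rule expectation_binomial_pair_pmf_add)
    also have "\<dots> \<le> measure_pmf.expectation (?B u) (\<lambda>x. measure_pmf.expectation (?B w) (\<lambda>y. h x))"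
      by (intro integral_mono int antimono_submultD(3)[OF h] le_add_prod_nat)
    finally show ?thesis
      by simp
  qed
  have submult: "measure_pmf.expectation (?B (u + v)) h \<le>
      measure_pmf.expectation (?B u) h * measure_pmf.expectation (?B v) h" for u v
  proof -
    have "measure_pmf.expectation (?B (u + v)) h =
        measure_pmf.expectation (?B u) (\<lambda>x. measure_pmf.expectation (?B v) (\<lambda>y. h (x + y)))"
      using r by (rule expectation_binomial_pair_pmf_add)
    also have "\<dots> \<le> measure_pmf.expectation (?B u) (\<lambda>x. measure_pmf.expectation (?B v) (\<lambda>y. h x * h y))"
      by (intro integral_mono int antimono_submultD(4)[OF h])
    finally show ?thesis
      by simp
  qed
  show ?thesis
    by (intro antimono_submultI nonneg le_1 antitone submult)
qed

lemma antimono_submult_comp: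
  assumes "antimono_submult h" "mono f" "\<And>x y. f x + f y \<le> f (x + y)"
  shows "antimono_submult (h \<circ> f)"
proof (rule antimono_submultI)
  fix x y
  show "0 \<le> (h \<circ> f) x" "(h \<circ> f) x \<le> 1"
    using antimono_submultD[OF assms(1)] by auto
  show "(h \<circ> f) y \<le> (h \<circ> f) x" if "x \<le> y"
    using antimono_submultD(3)[OF assms(1)] monoD[OF assms(2) that] by simp
  have "h (f (x + y)) \<le> h (f x + f y)"
    using antimono_submultD(3)[OF assms(1) assms(3)] .
  also have "\<dots> \<le> h (f x) * h (f y)"
    using antimono_submultD(4)[OF assms(1)] .
  finally show "(h \<circ> f) (x + y) \<le> (h \<circ> f) x * (h \<circ> f) y"
    by simp
qed

lemma antimono_submult_power:
  assumes "antimono_submult h"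
  shows "h (k * a, k * b) \<le> h (a, b) ^ k"
proof (induction k)
  case 0
  then show ?case
    using antimono_submultD(2)[OF assms] by simp
next
  case (Suc k)
  have "h (Suc k * a, Suc k * b) \<le> h (a, b) * h (k * a, k * b)"
    using antimono_submultD(4)[OF assms, of "(a, b)" "(k * a, k * b)"] by simp
  also have "\<dots> \<le> h (a, b) ^ Suc k"
    using Suc antimono_submultD(1)[OF assms] by (simp add: mult_left_mono)
  finally show ?case .
qed

lemma Zval_mono: "s \<le> t \<Longrightarrow> Zval s \<le> Zval t"
  by (auto simp: Zval_def less_eq_prod_def)

lemma Zval_superadditive: "Zval s + Zval t \<le> Zval (s + t)"
  by (auto simp: Zval_def)

lemma antimono_submult_power_Zval_div:
  fixes g :: real
  assumes "0 \<le> g" "g \<le> 1"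
  shows "antimono_submult (\<lambda>s. g ^ (Zval s div N))"
proof (rule antimono_submultI)
  fix s :: "nat \<times> nat"
  show "0 \<le> g ^ (Zval s div N)" "g ^ (Zval s div N) \<le> 1"
    using assms by (auto simp: power_le_one)
next
  fix s t :: "nat \<times> nat"
  assume "s \<le> t"
  then have "Zval s div N \<le> Zval t div N"
    by (intro div_le_mono Zval_mono)
  then show "g ^ (Zval t div N) \<le> g ^ (Zval s div N)"
    using assms by (intro power_decreasing) auto
next
  fix s t :: "nat \<times> nat"
  have "Zval s div N + Zval t div N \<le> Zval (s + t) div N"
    by (metis Zval_superadditive div_add1_eq div_le_mono le_add1 order.trans)
  then show "g ^ (Zval (s + t) div N) \<le> g ^ (Zval s div N) * g ^ (Zval t div N)"
    using assms by (metis power_add power_decreasing)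
qed

lemma coop_surv_nonneg: "0 \<le> coop_surv p q n s"
  by (simp add: coop_surv_def)

lemma coop_surv_inf_le: "coop_surv_inf p q s \<le> coop_surv p q n s"
  unfolding coop_surv_inf_def
  by (rule cINF_lower) (auto intro: bdd_belowI[of _ 0] simp: coop_surv_nonneg)

lemma le_coop_surv_inf: "(\<And>n. c \<le> coop_surv p q n s) \<Longrightarrow> c \<le> coop_surv_inf p q s"
  unfolding coop_surv_inf_def by (rule cINF_greatest) auto

locale cooperative_model =
  fixes p q :: real
  assumes p: "0 < p" "p < 1" and q: "0 < q" "q < 1"
begin

lemma coop_step_eq_binomial_pair:
  "coop_step p q s = binomial_pair_pmf q p (2 * (fst s + snd s), 2 * Zval s)"
  by (cases s) (simp add: coop_step_def binomial_pair_pmf_def Zval_def)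

lemma finite_set_coop_step: "finite (set_pmf (coop_step p q s))"
  using p q by (simp add: coop_step_eq_binomial_pair finite_set_binomial_pair_pmf)

lemma coop_path_nonempty: "xs \<in> set_pmf (coop_path p q n s) \<Longrightarrow> xs \<noteq> []"
  by (induction n arbitrary: s xs) auto

lemma coop_state_0: "coop_state p q 0 = return_pmf"
  by (simp add: fun_eq_iff coop_state_def)

lemma coop_state_Suc: "coop_state p q (Suc n) s = coop_step p q s \<bind> coop_state p q n"
  unfolding coop_state_def
  by (auto simp: map_bind_pmf map_pmf_comp intro!: bind_pmf_cong map_pmf_cong dest: coop_path_nonempty)

lemma finite_set_coop_state: "finite (set_pmf (coop_state p q n s))"
  by (induction n arbitrary: s) (auto simp: coop_state_0 coop_state_Suc finite_set_coop_step)

lemma integrable_coop_state [simp]: "integrable (measure_pmf (coop_state p q n s)) (f :: _ \<Rightarrow> real)"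
  by (rule integrable_measure_pmf_finite[OF finite_set_coop_state])

lemma coop_state_add: "coop_state p q (m + n) s = coop_state p q m s \<bind> coop_state p q n"
proof (induction m arbitrary: s)
  case 0
  then show ?case
    by (simp add: coop_state_0 bind_return_pmf)
next
  case (Suc m)
  then show ?case
    by (simp add: coop_state_Suc bind_assoc_pmf Suc.IH[abs_def])
qed

lemma coop_state_1: "coop_state p q (Suc 0) = coop_step p q"
  by (simp add: fun_eq_iff coop_state_Suc coop_state_0 bind_return_pmf')

lemma coop_state_Suc_right: "coop_state p q (Suc n) s = coop_state p q n s \<bind> coop_step p q"
  using coop_state_add[of n 1 s] by (simp add: coop_state_1)

lemma expectation_coop_state_add:
  "measure_pmf.expectation (coop_state p q (m + n) s) (f :: _ \<Rightarrow> real) =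
    measure_pmf.expectation (coop_state p q m s) (\<lambda>t. measure_pmf.expectation (coop_state p q n t) f)"
  unfolding coop_state_add by (intro expectation_bind_pmf_finite finite_set_coop_state)

lemma prob_coop_state_add:
  "measure_pmf.prob (coop_state p q (m + n) s) A =
    measure_pmf.expectation (coop_state p q m s) (\<lambda>t. measure_pmf.prob (coop_state p q n t) A)"
  by (subst (1 2) measure_pmf_prob_as_expectation) (rule expectation_coop_state_add)

lemma expectation_coop_state_Suc_right:
  "measure_pmf.expectation (coop_state p q (Suc n) s) (f :: _ \<Rightarrow> real) =
    measure_pmf.expectation (coop_state p q n s) (\<lambda>t. measure_pmf.expectation (coop_step p q t) f)"
  unfolding coop_state_Suc_right
  by (intro expectation_bind_pmf_finite finite_set_coop_state finite_set_coop_step)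

lemma Zval_coop_step_absorbing: "Zval s = 0 \<Longrightarrow> t \<in> set_pmf (coop_step p q s) \<Longrightarrow> Zval t = 0"
  using p q by (auto simp: coop_step_def Zval_def split: prod.splits)

lemma Zval_coop_state_absorbing: "Zval s = 0 \<Longrightarrow> t \<in> set_pmf (coop_state p q n s) \<Longrightarrow> Zval t = 0"
  by (induction n arbitrary: s)
    (auto simp: coop_state_0 coop_state_Suc dest: Zval_coop_step_absorbing)

lemma coop_surv_eq_prob_state:
  "coop_surv p q n s = measure_pmf.prob (coop_state p q n s) {t. 0 < Zval t}"
proof (induction n arbitrary: s)
  case 0
  then show ?case
    by (simp add: coop_surv_def coop_state_0 indicator_def)
next
  case (Suc n)
  define alive where "alive = {xs. \<forall>z\<in>set xs. 0 < Zval (z :: nat \<times> nat)}"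
  have fin_path: "finite (set_pmf (coop_path p q n t))" for t
    by (induction n arbitrary: t) (auto simp: finite_set_coop_step)
  have alive_Cons: "Cons s -` alive = (if 0 < Zval s then alive else {})"
    by (auto simp: alive_def)
  have "coop_surv p q (Suc n) s = measure_pmf.expectation (coop_step p q s)
      (\<lambda>t. measure_pmf.prob (coop_path p q n t) (Cons s -` alive))"
    unfolding coop_surv_def coop_path.simps alive_def[symmetric]
    by (subst measure_pmf_prob_as_expectation, subst expectation_bind_pmf_finite)
      (auto simp: finite_set_coop_step fin_path)
  also have "\<dots> = measure_pmf.expectation (coop_step p q s)
      (\<lambda>t. indicator {t. 0 < Zval t} s * coop_surv p q n t)"
    by (cases "0 < Zval s") (simp_all add: alive_Cons coop_surv_def alive_def)
  also have "\<dots> = measure_pmf.prob (coop_state p q (Suc n) s) {t. 0 < Zval t}"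
  proof (cases "0 < Zval s")
    case True
    then show ?thesis
      using prob_coop_state_add[of 1 n s] by (simp add: Suc.IH coop_state_1)
  next
    case False
    then have "measure_pmf.prob (coop_state p q (Suc n) s) {t. 0 < Zval t} = 0"
      unfolding measure_pmf_zero_iff using Zval_coop_state_absorbing[of s _ "Suc n"] by auto
    with False show ?thesis
      by simp
  qed
  finally show ?case .
qed

lemma prob_coop_step_survive_le:
  assumes "Zval t \<le> M"
  shows "measure_pmf.prob (coop_step p q t) {u. 0 < Zval u} \<le> 1 - (1 - p) ^ (2 * M)"
proof -
  let ?S = "coop_step p q t"
  have "measure_pmf.prob ?S {u. 0 < Zval u} \<le> measure_pmf.prob ?S (- {u. snd u = 0})"
    by (intro measure_pmf.finite_measure_mono) (auto simp: Zval_def)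
  also have "\<dots> = 1 - measure_pmf.prob (map_pmf snd ?S) {0}"
    using measure_pmf.prob_compl[of "{u. snd u = 0}" ?S] by (simp add: Compl_eq_Diff_UNIV vimage_def)
  also have "map_pmf snd ?S = binomial_pmf (2 * Zval t) p"
    by (simp add: coop_step_eq_binomial_pair binomial_pair_pmf_def map_snd_pair_pmf)
  also have "measure_pmf.prob (binomial_pmf (2 * Zval t) p) {0} = (1 - p) ^ (2 * Zval t)"
    using p by (simp add: measure_pmf_single)
  finally have "measure_pmf.prob ?S {u. 0 < Zval u} \<le> 1 - (1 - p) ^ (2 * Zval t)" .
  moreover have "(1 - p) ^ (2 * M) \<le> (1 - p) ^ (2 * Zval t)"
    using p assms by (intro power_decreasing) auto
  ultimately show ?thesis
    by simp
qed

lemma prob_coop_state_survive_Suc_le: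
  "measure_pmf.prob (coop_state p q (Suc n) s) {t. 0 < Zval t} \<le>
    measure_pmf.prob (coop_state p q n s) {t. 0 < Zval t} - (1 - p) ^ (2 * M) *
      (measure_pmf.prob (coop_state p q n s) {t. 0 < Zval t}
        - measure_pmf.prob (coop_state p q n s) {t. M < Zval t})"
proof -
  let ?S = "coop_state p q n s"
  have step: "measure_pmf.prob (coop_step p q t) {u. 0 < Zval u} \<le>
      indicator {t. 0 < Zval t} t - (1 - p) ^ (2 * M) * indicator {t. 0 < Zval t \<and> Zval t \<le> M} t"
    for t
  proof (cases "Zval t = 0")
    case True
    then have "measure_pmf.prob (coop_step p q t) {u. 0 < Zval u} = 0"
      unfolding measure_pmf_zero_iff using Zval_coop_step_absorbing[of t] by auto
    with True show ?thesis
      by simp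
  next
    case False
    then show ?thesis
      using prob_coop_step_survive_le[of t M] measure_pmf.prob_le_1 by (auto simp: indicator_def)
  qed
  have "measure_pmf.prob (coop_state p q (Suc n) s) {t. 0 < Zval t} =
      measure_pmf.expectation ?S (\<lambda>t. measure_pmf.prob (coop_step p q t) {u. 0 < Zval u})"
    unfolding measure_pmf_prob_as_expectation by (rule expectation_coop_state_Suc_right)
  also have "\<dots> \<le> measure_pmf.expectation ?S (\<lambda>t. indicator {t. 0 < Zval t} t
      - (1 - p) ^ (2 * M) * indicator {t. 0 < Zval t \<and> Zval t \<le> M} t)"
    by (intro integral_mono step) auto
  finally have "measure_pmf.prob (coop_state p q (Suc n) s) {t. 0 < Zval t} \<le>
      measure_pmf.prob ?S {t. 0 < Zval t}
      - (1 - p) ^ (2 * M) * measure_pmf.prob ?S {t. 0 < Zval t \<and> Zval t \<le> M}"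
    by simp
  moreover have "measure_pmf.prob ?S {t. 0 < Zval t} =
      measure_pmf.prob ?S ({t. 0 < Zval t \<and> Zval t \<le> M} \<union> {t. M < Zval t})"
    by (rule arg_cong[where f = "measure_pmf.prob ?S"]) auto
  moreover have "\<dots> = measure_pmf.prob ?S {t. 0 < Zval t \<and> Zval t \<le> M}
      + measure_pmf.prob ?S {t. M < Zval t}"
    by (rule measure_pmf.finite_measure_Union) auto
  ultimately show ?thesis
    by simp
qed

lemma coop_surv_Suc_le: "coop_surv p q (Suc n) s \<le> coop_surv p q n s"
  using prob_coop_state_survive_Suc_le[of n s 0] by (simp add: coop_surv_eq_prob_state)

lemma coop_surv_antimono: "n \<le> m \<Longrightarrow> coop_surv p q m s \<le> coop_surv p q n s"
  by (rule lift_Suc_antimono_le[of "\<lambda>n. coop_surv p q n s"]) (auto intro: coop_surv_Suc_le)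

lemma coop_surv_Suc_le_if_bounded_mean:
  assumes bounded: "\<And>n. measure_pmf.expectation (coop_state p q n s) (\<lambda>t. real (Zval t)) \<le> C"
    and "0 < M"
  shows "coop_surv p q (Suc n) s \<le> coop_surv p q n s - (1 - p) ^ (2 * M) * (coop_surv p q n s - C / M)"
proof -
  let ?S = "coop_state p q n s"
  have "measure_pmf.prob ?S {t. M < Zval t} \<le> measure_pmf.expectation ?S (\<lambda>t. real (Zval t)) / M"
    using measure_pmf_prob_gt_le_expectation[of ?S "\<lambda>t. real (Zval t)" "real M"] \<open>0 < M\<close> by simp
  also have "\<dots> \<le> C / M"
    using bounded \<open>0 < M\<close> by (simp add: divide_right_mono)
  finally have "(1 - p) ^ (2 * M) * (measure_pmf.prob ?S {t. 0 < Zval t} - C / M) \<le>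
      (1 - p) ^ (2 * M) * (measure_pmf.prob ?S {t. 0 < Zval t} - measure_pmf.prob ?S {t. M < Zval t})"
    using p by (intro mult_left_mono) auto
  then show ?thesis
    using prob_coop_state_survive_Suc_le[of n s M] by (simp add: coop_surv_eq_prob_state)
qed

lemma coop_surv_inf_eq_0_if_bounded_mean:
  assumes bounded: "\<And>n. measure_pmf.expectation (coop_state p q n s) (\<lambda>t. real (Zval t)) \<le> C"
  shows "coop_surv_inf p q s = 0"
proof (rule ccontr)
  define c where "c = coop_surv_inf p q s"
  assume "coop_surv_inf p q s \<noteq> 0"
  moreover have "0 \<le> coop_surv_inf p q s"
    by (rule le_coop_surv_inf) (rule coop_surv_nonneg)
  ultimately have c: "0 < c"
    by (simp add: c_def)
  have surv_ge: "c \<le> coop_surv p q n s" for n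
    unfolding c_def by (rule coop_surv_inf_le)
  have "0 \<le> C"
    using bounded[of 0] by (simp add: coop_state_0)
  obtain M :: nat where M: "2 * C / c < M"
    using reals_Archimedean2 by blast
  moreover have "0 \<le> 2 * C / c"
    using \<open>0 \<le> C\<close> c by simp
  ultimately have "0 < M"
    by simp
  have "C / M \<le> c / 2"
    using M c \<open>0 < M\<close> by (simp add: field_simps)
  define \<delta> where "\<delta> = (1 - p) ^ (2 * M)"
  have \<delta>: "0 < \<delta>"
    using p by (simp add: \<delta>_def)
  have dec: "coop_surv p q (Suc n) s \<le> coop_surv p q n s - \<delta> * (c / 2)" for n
  proof -
    have "\<delta> * (c / 2) \<le> \<delta> * (coop_surv p q n s - C / M)"
      using surv_ge[of n] \<open>C / M \<le> c / 2\<close> \<delta> by (intro mult_left_mono) auto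
    then show ?thesis
      using coop_surv_Suc_le_if_bounded_mean[OF bounded \<open>0 < M\<close>, of n] by (simp add: \<delta>_def)
  qed
  have surv_le: "coop_surv p q n s \<le> 1 - n * (\<delta> * (c / 2))" for n
  proof (induction n)
    case 0
    then show ?case
      by (simp add: coop_surv_eq_prob_state)
  next
    case (Suc n)
    then show ?case
      using dec[of n] by (simp add: algebra_simps add_divide_distrib)
  qed
  obtain n :: nat where "1 / (\<delta> * (c / 2)) < n"
    using reals_Archimedean2 by blast
  then have "1 < n * (\<delta> * (c / 2))"
    using \<delta> c by (simp add: field_simps)
  then show False
    using surv_le[of n] surv_ge[of n] c by simp
qed

lemma coop_surv_inf_eq_0_if_mean_le_1:
  assumes "\<And>T. T \<ge> 1 \<Longrightarrow> measure_pmf.expectation (coop_state p q T (1, 1)) (\<lambda>s. real (Zval s)) \<le> 1"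
  shows "coop_surv_inf p q (1, 1) = 0"
proof (rule coop_surv_inf_eq_0_if_bounded_mean)
  show "measure_pmf.expectation (coop_state p q T (1, 1)) (\<lambda>s. real (Zval s)) \<le> 1" for T
  proof (cases "T = 0")
    case True
    then show ?thesis
      by (simp add: coop_state_0 Zval_def)
  next
    case False
    then show ?thesis
      using assms[of T] by simp
  qed
qed

lemma antimono_submult_coop_step:
  assumes "antimono_submult h"
  shows "antimono_submult (\<lambda>s. measure_pmf.expectation (coop_step p q s) h)"
proof -
  let ?f = "\<lambda>s :: nat \<times> nat. (2 * (fst s + snd s), 2 * Zval s)"
  have "antimono_submult (\<lambda>u. measure_pmf.expectation (binomial_pair_pmf q p u) h)"
    using p q by (intro antimono_submult_binomial_pair assms) auto
  moreover have "mono ?f"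
  proof (rule monoI)
    fix s t :: "nat \<times> nat"
    assume "s \<le> t"
    then show "?f s \<le> ?f t"
      using Zval_mono[OF \<open>s \<le> t\<close>] by (simp add: less_eq_prod_def)
  qed
  moreover have "?f s + ?f t \<le> ?f (s + t)" for s t
    using Zval_superadditive[of s t] by (simp add: less_eq_prod_def)
  ultimately have "antimono_submult ((\<lambda>u. measure_pmf.expectation (binomial_pair_pmf q p u) h) \<circ> ?f)"
    by (rule antimono_submult_comp)
  then show ?thesis
    by (simp add: comp_def coop_step_eq_binomial_pair)
qed

lemma antimono_submult_coop_state:
  assumes "antimono_submult h"
  shows "antimono_submult (\<lambda>s. measure_pmf.expectation (coop_state p q n s) h)"
proof (induction n)
  case 0
  then show ?case
    using assms by (simp add: coop_state_0)
next
  case (Suc n)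
  then show ?case
    using antimono_submult_coop_step[OF Suc.IH] expectation_coop_state_add[of 1 n]
    by (simp add: coop_state_1)
qed

lemma expectation_coop_state_mult_le:
  fixes h :: "nat \<times> nat \<Rightarrow> real"
  assumes "\<And>s. measure_pmf.expectation (coop_state p q T s) h \<le> h s"
  shows "measure_pmf.expectation (coop_state p q (n * T) s) h \<le> h s"
proof (induction n arbitrary: s)
  case 0
  then show ?case
    by (simp add: coop_state_0)
next
  case (Suc n)
  have "measure_pmf.expectation (coop_state p q (Suc n * T) s) h =
      measure_pmf.expectation (coop_state p q T s) (\<lambda>t. measure_pmf.expectation (coop_state p q (n * T) t) h)"
    by (simp add: expectation_coop_state_add)
  also have "\<dots> \<le> measure_pmf.expectation (coop_state p q T s) h"
    by (intro integral_mono Suc.IH) auto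
  also have "\<dots> \<le> h s"
    by (rule assms)
  finally show ?case .
qed

lemma expectation_coop_state_power_Zval_div_le:
  fixes g :: real
  assumes g: "0 \<le> g" "g \<le> 1"
    and below: "measure_pmf.expectation (coop_state p q T (N, N)) (\<lambda>t. g ^ (Zval t div N)) \<le> g"
  shows "measure_pmf.expectation (coop_state p q T s) (\<lambda>t. g ^ (Zval t div N)) \<le> g ^ (Zval s div N)"
proof -
  define H where "H s = measure_pmf.expectation (coop_state p q T s) (\<lambda>t. g ^ (Zval t div N))" for s
  have H: "antimono_submult H"
    unfolding H_def using g by (intro antimono_submult_coop_state antimono_submult_power_Zval_div)
  define k where "k = Zval s div N"
  have "(k * N, k * N) \<le> s"
    using div_times_less_eq_dividend[of "Zval s" N]
    by (cases s) (auto simp: k_def Zval_def less_eq_prod_def)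
  then have "H s \<le> H (k * N, k * N)"
    by (rule antimono_submultD(3)[OF H])
  also have "\<dots> \<le> H (N, N) ^ k"
    by (rule antimono_submult_power[OF H])
  also have "\<dots> \<le> g ^ k"
    using below antimono_submultD(1)[OF H] by (intro power_mono) (simp_all add: H_def)
  finally show ?thesis
    by (simp add: H_def k_def)
qed

lemma prob_coop_state_survive_ge:
  assumes mean: "1 < measure_pmf.expectation (coop_state p q T (N, N)) (\<lambda>s. real (Zval s div N))"
  obtains g :: real where "0 \<le> g" "g < 1"
    "\<And>n s. 1 - g ^ (Zval s div N) \<le> measure_pmf.prob (coop_state p q (n * T) s) {t. 0 < Zval t}"
proof -
  let ?Z = "map_pmf (\<lambda>s. Zval s div N) (coop_state p q T (N, N))"
  have "finite (set_pmf ?Z)"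
    by (simp add: finite_set_coop_state)
  moreover have "1 < measure_pmf.expectation ?Z real"
    using mean by simp
  ultimately obtain g :: real where g: "0 \<le> g" "g < 1"
    and below: "measure_pmf.expectation ?Z (\<lambda>k. g ^ k) \<le> g"
    by (rule pgf_below_diagonal)
  let ?h = "\<lambda>t. g ^ (Zval t div N)"
  have "1 - ?h s \<le> measure_pmf.prob (coop_state p q (n * T) s) {t. 0 < Zval t}" for n s
  proof -
    have "measure_pmf.expectation (coop_state p q (n * T) s) ?h \<le> ?h s"
      using g below
      by (intro expectation_coop_state_mult_le expectation_coop_state_power_Zval_div_le) simp_all
    then have "1 - ?h s \<le> measure_pmf.expectation (coop_state p q (n * T) s) (\<lambda>t. 1 - ?h t)"
      by simp
    also have "\<dots> \<le> measure_pmf.expectation (coop_state p q (n * T) s) (indicator {t. 0 < Zval t})"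
      using g by (intro integral_mono) (auto simp: indicator_def)
    finally show ?thesis
      by simp
  qed
  with g show ?thesis
    by (rule that)
qed

lemma exists_reachable_Zval_ge: "\<exists>t \<in> set_pmf (coop_state p q j (1, 1)). 2 ^ j \<le> Zval t"
proof (induction j)
  case 0
  then show ?case
    by (simp add: coop_state_0 Zval_def)
next
  case (Suc j)
  then obtain x y where xy: "(x, y) \<in> set_pmf (coop_state p q j (1, 1))" "2 ^ j \<le> min x y"
    by (auto simp: Zval_def)
  have "(2 * (x + y), 2 * min x y) \<in> set_pmf (coop_step p q (x, y))"
    using p q by (simp add: coop_step_def)
  then have "(2 * (x + y), 2 * min x y) \<in> set_pmf (coop_state p q (Suc j) (1, 1))"
    using xy(1) by (auto simp: coop_state_Suc_right)
  moreover have "2 ^ Suc j \<le> Zval (2 * (x + y), 2 * min x y)"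
    using xy(2) by (simp add: Zval_def)
  ultimately show ?case
    by blast
qed

lemma coop_surv_inf_pos_if_mean_gt_1:
  assumes "N \<ge> 1" "T \<ge> 1"
    and mean: "1 < measure_pmf.expectation (coop_state p q T (N, N)) (\<lambda>s. real (Zval s div N))"
  shows "0 < coop_surv_inf p q (1, 1)"
proof -
  obtain g :: real where g: "0 \<le> g" "g < 1" and survive:
    "\<And>n s. 1 - g ^ (Zval s div N) \<le> measure_pmf.prob (coop_state p q (n * T) s) {t. 0 < Zval t}"
    using prob_coop_state_survive_ge[OF mean] by blast
  obtain t0 where t0: "t0 \<in> set_pmf (coop_state p q N (1, 1))" "2 ^ N \<le> Zval t0"
    using exists_reachable_Zval_ge by blast
  have "N < 2 ^ N"
    by (rule less_exp)
  then have "N \<le> Zval t0"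
    using t0(2) by linarith
  then have "1 \<le> Zval t0 div N"
    using div_le_mono[of N "Zval t0" N] \<open>N \<ge> 1\<close> by simp
  then have g_t0: "g ^ (Zval t0 div N) \<le> g"
    using power_decreasing[of 1 "Zval t0 div N" g] g by simp
  define \<pi> where "\<pi> = pmf (coop_state p q N (1, 1)) t0"
  have "(1 - g) * \<pi> \<le> coop_surv p q n (1, 1)" for n
  proof -
    let ?F = "\<lambda>t. measure_pmf.prob (coop_state p q (n * T) t) {t. 0 < Zval t}"
    have "(1 - g) * \<pi> = measure_pmf.expectation (coop_state p q N (1, 1)) (\<lambda>t. (1 - g) * indicator {t0} t)"
      by (simp add: \<pi>_def measure_pmf_single)
    also have "\<dots> \<le> measure_pmf.expectation (coop_state p q N (1, 1)) ?F"
      using survive[where n = n and s = t0] g_t0 by (intro integral_mono) (auto simp: indicator_def)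
    also have "\<dots> = coop_surv p q (N + n * T) (1, 1)"
      by (simp add: coop_surv_eq_prob_state prob_coop_state_add)
    also have "\<dots> \<le> coop_surv p q n (1, 1)"
      using \<open>T \<ge> 1\<close> by (intro coop_surv_antimono) (simp add: trans_le_add2)
    finally show ?thesis .
  qed
  then have "(1 - g) * \<pi> \<le> coop_surv_inf p q (1, 1)"
    by (rule le_coop_surv_inf)
  moreover have "0 < (1 - g) * \<pi>"
    using g t0(1) by (simp add: \<pi>_def pmf_positive)
  ultimately show ?thesis
    by linarith
qed

end

theorem lemma3:
  fixes p q :: real
  assumes "0 < p" "p < 1" "0 < q" "q < 1"
  shows "coop_surv_inf p q (1, 1) > 0 \<longleftrightarrow>
         (\<exists>N T :: nat. N \<ge> 1 \<and> T \<ge> 1 \<and>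
            measure_pmf.expectation (coop_state p q T (N, N))
              (\<lambda>s. real (Zval s div N)) > 1)"
proof -
  interpret cooperative_model p q
    using assms by unfold_locales
  show ?thesis
  proof
    assume "coop_surv_inf p q (1, 1) > 0"
    then obtain T where "T \<ge> 1"
      and "1 < measure_pmf.expectation (coop_state p q T (1, 1)) (\<lambda>s. real (Zval s))"
      using coop_surv_inf_eq_0_if_mean_le_1 by force
    then show "\<exists>N T :: nat. N \<ge> 1 \<and> T \<ge> 1 \<and>
        measure_pmf.expectation (coop_state p q T (N, N)) (\<lambda>s. real (Zval s div N)) > 1"
      by (intro exI[of _ 1] exI[of _ T]) simp
  next
    assume "\<exists>N T :: nat. N \<ge> 1 \<and> T \<ge> 1 \<and>
        measure_pmf.expectation (coop_state p q T (N, N)) (\<lambda>s. real (Zval s div N)) > 1"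
    then obtain N T :: nat where "N \<ge> 1" "T \<ge> 1"
      and "1 < measure_pmf.expectation (coop_state p q T (N, N)) (\<lambda>s. real (Zval s div N))"
      by blast
    then show "coop_surv_inf p q (1, 1) > 0"
      by (rule coop_surv_inf_pos_if_mean_gt_1)
  qed
qed

end
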